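(* Let $R$ be a finite commutative ring, $K\le R^\times$, and $\mathcal A=\mathcal A(K,R)$ the multiplication S-ring of $\mathrm{Cyc}(K,R)$. Then $\mathcal S^*(\mathcal A)$ contains the sets $rK$ for all $r\in R^\times$ and the sets $(1+rK)\cap R^\times$ for all $r\in R$.
   Context: All rings have an identity. A scheme on a finite set $V$ is a pair $(V,\mathcal R)$, $\mathcal R$ a partition of $V\times V$ into nonempty basis relations, closed under transposition, with the diagonal a union of basis relations and with the intersection numbers $|\{y:(x,y)\in R_1,(y,z)\in R_2\}|$ depending only on the basis relation containing $(x,z)$; relations are unions of basis relations. For a set $\mathcal M$ of relations, $[\mathcal C,\mathcal M]$ is the smallest scheme on $V$ having all relations of $\mathcal C$ and of $\mathcal M$ as relations; $\mathcal C_w=[\mathcal C,\{(w,w)\}]$. If $\Delta(U)$ is a relation, the restriction $\mathcal C_U$ is the scheme on $U$ with basis relations the nonempty $S\cap U^2$. $\mathrm{Iso}(\mathcal C)$ is the group of permutations of $V$ permuting the basis relations; for $\Gamma\le\mathrm{Iso}(\mathcal C)$, $\mathcal C^\Gamma$ is the scheme whose relations are the $\Gamma$-invariant relations of $\mathcal C$. For $K\le R^\times$, $\mathcal C=\mathrm{Cyc}(K,R)$ is the scheme on $R$ with basis relations $\{(x,y): y-x\in rK\}$, $r\in R$. Put $u=0$; then $\mathcal C'=((\mathcal C_u)_{R^\times})^{R^\times_{right}}$, where $R^\times_{right}=\{x\mapsto xa: a\in R^\times\}$, is a scheme on $R^\times$ whose basis relations are invariant under $R^\times_{right}$, hence each is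 of the form $R(X)=\{(g,xg): g\in R^\times, x\in X\}$ for some $X\subseteq R^\times$. An S-ring over a finite group $G$ is a subring of $\mathbb Z[G]$ with $\mathbb Z$-basis $\{\sum_{x\in X}x: X\in\mathcal S\}$ for a partition $\mathcal S$ of $G$ with $\{1\}\in\mathcal S$ and $X\in\mathcal S\Rightarrow X^{-1}\in\mathcal S$; $\mathcal S^*$ denotes the set of unions of members of $\mathcal S$ (basic sets). The multiplication S-ring $\mathcal A(K,R)$ is the S-ring over $R^\times$ whose basic sets are the sets $X$ with $R(X)$ a basis relation of $\mathcal C'$. *)

theory Defs
  imports Main
begin

definition is_scheme :: "'a set \<Rightarrow> ('a \<times> 'a) set set \<Rightarrow> bool" where
  "is_scheme V S \<longleftrightarrow>
     finite V \<and>
     (\<forall>s\<in>S. s \<noteq> {}) \<and>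
     \<Union>S = V \<times> V \<and>
     (\<forall>s\<in>S. \<forall>t\<in>S. s \<noteq> t \<longrightarrow> s \<inter> t = {}) \<and>
     (\<forall>s\<in>S. s\<inverse> \<in> S) \<and>
     (\<exists>T\<subseteq>S. \<Union>T = Id_on V) \<and>
     (\<forall>r1\<in>S. \<forall>r2\<in>S. \<forall>s\<in>S. \<forall>x z x' z'. (x, z) \<in> s \<longrightarrow> (x', z') \<in> s \<longrightarrow>
        card {y. (x, y) \<in> r1 \<and> (y, z) \<in> r2} = card {y. (x', y) \<in> r1 \<and> (y, z') \<in> r2})"

definition scheme_relations :: "('a \<times> 'a) set set \<Rightarrow> ('a \<times> 'a) set set" where
  "scheme_relations S = {\<Union>T | T. T \<subseteq> S}"

definition gen_scheme :: "'a set \<Rightarrow> ('a \<times> 'a) set set \<Rightarrow> ('a \<times> 'a) set set \<Rightarrow> ('a \<times> 'a) set set" where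
  "gen_scheme V S M = (THE S'. is_scheme V S' \<and>
      scheme_relations S \<subseteq> scheme_relations S' \<and> M \<subseteq> scheme_relations S' \<and>
      (\<forall>S''. is_scheme V S'' \<and> scheme_relations S \<subseteq> scheme_relations S'' \<and>
              M \<subseteq> scheme_relations S'' \<longrightarrow> scheme_relations S' \<subseteq> scheme_relations S''))"

definition point_ext :: "'a set \<Rightarrow> ('a \<times> 'a) set set \<Rightarrow> 'a \<Rightarrow> ('a \<times> 'a) set set" where
  "point_ext V S w = gen_scheme V S {{(w, w)}}"

definition restrict_scheme :: "'a set \<Rightarrow> ('a \<times> 'a) set set \<Rightarrow> ('a \<times> 'a) set set" where
  "restrict_scheme U S = {s \<inter> (U \<times> U) | s. s \<in> S \<and> s \<inter> (U \<times> U) \<noteq> {}}"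

text \<open>C^\<Gamma>: the scheme whose relations are the \<Gamma>-invariant relations of C; its basis
  relations are the minimal nonempty \<Gamma>-invariant relations of C.\<close>
definition invariant_rel :: "('a \<Rightarrow> 'a) set \<Rightarrow> ('a \<times> 'a) set \<Rightarrow> bool" where
  "invariant_rel \<Gamma> r \<longleftrightarrow> (\<forall>g\<in>\<Gamma>. (\<lambda>(x, y). (g x, g y)) ` r = r)"

definition fixed_scheme :: "('a \<Rightarrow> 'a) set \<Rightarrow> ('a \<times> 'a) set set \<Rightarrow> ('a \<times> 'a) set set" where
  "fixed_scheme \<Gamma> S = {r. r \<in> scheme_relations S \<and> invariant_rel \<Gamma> r \<and> r \<noteq> {} \<and>
      (\<forall>r'. r' \<in> scheme_relations S \<and> invariant_rel \<Gamma> r' \<and> r' \<noteq> {} \<and> r' \<subseteq> r \<longrightarrow> r' = r)}"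

definition units_of_ring :: "'a::comm_ring_1 set" where
  "units_of_ring = {x. x dvd 1}"

definition is_unit_subgroup :: "'a::comm_ring_1 set \<Rightarrow> bool" where
  "is_unit_subgroup K \<longleftrightarrow> K \<subseteq> units_of_ring \<and> 1 \<in> K \<and>
     (\<forall>a\<in>K. \<forall>b\<in>K. a * b \<in> K) \<and> (\<forall>a\<in>K. \<exists>b\<in>K. a * b = 1)"

definition Cyc :: "'a::comm_ring_1 set \<Rightarrow> ('a \<times> 'a) set set" where
  "Cyc K = {{(x, y). y - x \<in> (\<lambda>k. r * k) ` K} | r. True}"

definition Rrel :: "'a::comm_ring_1 set \<Rightarrow> ('a \<times> 'a) set" where
  "Rrel X = {(g, x * g) | g x. g \<in> units_of_ring \<and> x \<in> X}"

definition C_prime :: "'a::{comm_ring_1,finite} set \<Rightarrow> ('a \<times> 'a) set set" where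
  "C_prime K = fixed_scheme ((\<lambda>a. \<lambda>x. x * a) ` units_of_ring)
      (restrict_scheme units_of_ring (point_ext UNIV (Cyc K) 0))"

definition mult_sring_basic :: "'a::{comm_ring_1,finite} set \<Rightarrow> 'a set set" where
  "mult_sring_basic K = {X. X \<subseteq> units_of_ring \<and> Rrel X \<in> C_prime K}"

definition sring_unions :: "'a set set \<Rightarrow> 'a set set" where
  "sring_unions B = {\<Union>T | T. T \<subseteq> B}"

end

(*
  The relations of a scheme on a finite set are closed under unions, complements, converse and
  relational composition.  The point extension of Cyc(K,R) at 0 has the relations
  {(x,y). y - x \<in> sK} and {(0,0)}, so composing through (0,0) gives every rectangle aK \<times> bK.
  Now R(rK) is the union of the rectangles aK \<times> raK over the units a, and R((1 + rK) \<inter> R^\<times>) is the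
  union of the rectangles aK \<times> bK cut down by {(x,y). y - x \<in> raK}.  Both relations lie on
  R^\<times> \<times> R^\<times> and are invariant under right multiplication by units, hence unions of basis
  relations of C'; each of these is R(X) for a basic set X.
*)

theory Submission
  imports Defs
begin

section \<open>Relations of a scheme\<close>

lemma is_schemeD:
  assumes "is_scheme V S"
  shows "finite V" "\<forall>s\<in>S. s \<noteq> {}" "\<Union>S = V \<times> V" "pairwise disjnt S" "\<forall>s\<in>S. s\<inverse> \<in> S"
    "\<exists>T\<subseteq>S. \<Union>T = Id_on V"
    "\<forall>r1\<in>S. \<forall>r2\<in>S. \<forall>s\<in>S. \<forall>x z x' z'. (x, z) \<in> s \<longrightarrow> (x', z') \<in> s \<longrightarrow>
        card {y. (x, y) \<in> r1 \<and> (y, z) \<in> r2} = card {y. (x', y) \<in> r1 \<and> (y, z') \<in> r2}"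
  using assms unfolding is_scheme_def pairwise_def disjnt_def
  apply -
  apply (elim conjE, assumption)+
  done

lemma scheme_relations_partition:
  assumes "pairwise disjnt S" and "\<Union>S = W"
  shows "A \<in> scheme_relations S \<longleftrightarrow> A \<subseteq> W \<and> (\<forall>s\<in>S. s \<subseteq> A \<or> s \<inter> A = {})"
proof
  assume "A \<in> scheme_relations S"
  then obtain T where T: "T \<subseteq> S" "A = \<Union>T"
    unfolding scheme_relations_def by blast
  have "s \<inter> t = {}" if "s \<in> S" "s \<notin> T" "t \<in> T" for s t
  proof -
    have "t \<in> S" "s \<noteq> t" using that T(1) by auto
    then show ?thesis using assms(1) \<open>s \<in> S\<close> by (simp add: pairwise_def disjnt_def)
  qed
  then have "s \<subseteq> A \<or> s \<inter> A = {}" if "s \<in> S" for s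
    using that T(2) by blast
  moreover have "A \<subseteq> W"
    using T assms(2) by blast
  ultimately show "A \<subseteq> W \<and> (\<forall>s\<in>S. s \<subseteq> A \<or> s \<inter> A = {})"
    by simp
next
  assume A: "A \<subseteq> W \<and> (\<forall>s\<in>S. s \<subseteq> A \<or> s \<inter> A = {})"
  have "A \<subseteq> \<Union>{s\<in>S. s \<subseteq> A}"
  proof
    fix p assume "p \<in> A"
    moreover obtain s where "s \<in> S" "p \<in> s"
      using \<open>p \<in> A\<close> A assms(2) by blast
    ultimately show "p \<in> \<Union>{s\<in>S. s \<subseteq> A}"
      using A by blast
  qed
  then have "A = \<Union>{s\<in>S. s \<subseteq> A}"
    by blast
  then show "A \<in> scheme_relations S"
    unfolding scheme_relations_def by blast
qed

lemma scheme_relations_iff: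
  assumes "is_scheme UNIV S"
  shows "A \<in> scheme_relations S \<longleftrightarrow> (\<forall>s\<in>S. s \<subseteq> A \<or> s \<inter> A = {})"
  using scheme_relations_partition[OF is_schemeD(4,3)[OF assms]] by simp

lemma scheme_relationsI:
  "is_scheme UNIV S \<Longrightarrow> (\<And>s. s \<in> S \<Longrightarrow> s \<subseteq> A \<or> s \<inter> A = {}) \<Longrightarrow> A \<in> scheme_relations S"
  using scheme_relations_iff by blast

lemma scheme_relationsD:
  "is_scheme UNIV S \<Longrightarrow> A \<in> scheme_relations S \<Longrightarrow> s \<in> S \<Longrightarrow> s \<subseteq> A \<or> s \<inter> A = {}"
  using scheme_relations_iff by blast

lemma basis_in_scheme_relations: "s \<in> S \<Longrightarrow> s \<in> scheme_relations S"
  unfolding scheme_relations_def by (intro CollectI exI[of _ "{s}"]) simp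

lemma scheme_basis_iff_minimal:
  assumes "is_scheme UNIV S"
  shows "s \<in> S \<longleftrightarrow> s \<in> scheme_relations S \<and> s \<noteq> {} \<and>
    (\<forall>A\<in>scheme_relations S. A \<subseteq> s \<longrightarrow> A = {} \<or> A = s)"
proof
  assume "s \<in> S"
  have "A = {} \<or> A = s" if "A \<in> scheme_relations S" "A \<subseteq> s" for A
  proof -
    have "s \<subseteq> A \<or> s \<inter> A = {}"
      using that(1) \<open>s \<in> S\<close> scheme_relations_iff[OF assms] by blast
    then show ?thesis
      using that(2) by blast
  qed
  then show "s \<in> scheme_relations S \<and> s \<noteq> {} \<and> (\<forall>A\<in>scheme_relations S. A \<subseteq> s \<longrightarrow> A = {} \<or> A = s)"
    using \<open>s \<in> S\<close> basis_in_scheme_relations is_schemeD(2)[OF assms] by blast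
next
  assume min: "s \<in> scheme_relations S \<and> s \<noteq> {} \<and> (\<forall>A\<in>scheme_relations S. A \<subseteq> s \<longrightarrow> A = {} \<or> A = s)"
  obtain T where "T \<subseteq> S" "s = \<Union>T"
    using min[THEN conjunct1] unfolding scheme_relations_def by blast
  then obtain t where "t \<in> S" "t \<subseteq> s" "t \<noteq> {}"
    using min by blast
  moreover have "t \<in> scheme_relations S"
    using \<open>t \<in> S\<close> by (rule basis_in_scheme_relations)
  ultimately have "t = s"
    using min by blast
  then show "s \<in> S"
    using \<open>t \<in> S\<close> by simp
qed

lemma scheme_eqI:
  assumes "is_scheme UNIV S1" "is_scheme UNIV S2" "scheme_relations S1 = scheme_relations S2"
  shows "S1 = S2"
  by (rule set_eqI)
    (simp only: scheme_basis_iff_minimal[OF assms(1)] scheme_basis_iff_minimal[OF assms(2)] assms(3))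

lemma card_paths_const:
  fixes S :: "('a::finite \<times> 'a) set set"
  assumes sch: "is_scheme UNIV S" and A: "A \<in> scheme_relations S" and B: "B \<in> scheme_relations S"
    and s: "s \<in> S" "(x, z) \<in> s" "(x', z') \<in> s"
  shows "card {y. (x, y) \<in> A \<and> (y, z) \<in> B} = card {y. (x', y) \<in> A \<and> (y, z') \<in> B}"
proof -
  obtain TA TB where T: "TA \<subseteq> S" "A = \<Union>TA" "TB \<subseteq> S" "B = \<Union>TB"
    using A B unfolding scheme_relations_def by blast
  have disj: "pairwise disjnt S"
    using is_schemeD(4)[OF sch] .
  have "card {y. (x, y) \<in> A \<and> (y, z) \<in> B} =
      (\<Sum>(a, b)\<in>TA \<times> TB. card {y. (x, y) \<in> a \<and> (y, z) \<in> b})" for x z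
  proof -
    have "{y. (x, y) \<in> A \<and> (y, z) \<in> B} = (\<Union>(a, b)\<in>TA \<times> TB. {y. (x, y) \<in> a \<and> (y, z) \<in> b})"
      using T by blast
    moreover have "{y. (x, y) \<in> a \<and> (y, z) \<in> b} \<inter> {y. (x, y) \<in> a' \<and> (y, z) \<in> b'} = {}"
      if "(a, b) \<in> TA \<times> TB" "(a', b') \<in> TA \<times> TB" "(a, b) \<noteq> (a', b')" for a b a' b'
    proof -
      have "a \<in> S" "a' \<in> S" "b \<in> S" "b' \<in> S"
        using that(1,2) T(1,3) by auto
      then have "disjnt a a' \<or> disjnt b b'"
        using that(3) pairwiseD[OF disj] by blast
      then show ?thesis
        unfolding disjnt_def by blast
    qed
    ultimately show ?thesis
      by (simp add: card_UN_disjoint case_prod_unfold)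
  qed
  moreover have "card {y. (x, y) \<in> a \<and> (y, z) \<in> b} = card {y. (x', y) \<in> a \<and> (y, z') \<in> b}"
    if "a \<in> TA" "b \<in> TB" for a b
  proof -
    have "a \<in> S" "b \<in> S" using that T(1,3) by auto
    then show ?thesis using is_schemeD(7)[OF sch] s by blast
  qed
  ultimately show ?thesis
    by (auto intro: sum.cong)
qed

section \<open>Coherent families of relations\<close>

text \<open>On a finite type these are exactly the relation families of schemes (the set-theoretic
  form of coherent algebras); the basis is recovered as the atoms rel_atom below.\<close>

definition coherent_family :: "('a \<times> 'a) set set \<Rightarrow> bool" where
  "coherent_family F \<longleftrightarrow>
     (\<forall>\<A>\<subseteq>F. \<Union>\<A> \<in> F) \<and> (\<forall>A\<in>F. - A \<in> F) \<and> (\<forall>A\<in>F. A\<inverse> \<in> F) \<and> Id \<in> F \<and>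
     (\<forall>A\<in>F. \<forall>B\<in>F. \<forall>k. {(x, z). card {y. (x, y) \<in> A \<and> (y, z) \<in> B} = k} \<in> F)"

lemma coherent_familyD:
  assumes "coherent_family F"
  shows "\<A> \<subseteq> F \<Longrightarrow> \<Union>\<A> \<in> F" "A \<in> F \<Longrightarrow> - A \<in> F" "A \<in> F \<Longrightarrow> A\<inverse> \<in> F" "Id \<in> F"
    "A \<in> F \<Longrightarrow> B \<in> F \<Longrightarrow> {(x, z). card {y. (x, y) \<in> A \<and> (y, z) \<in> B} = k} \<in> F"
  using assms unfolding coherent_family_def by simp_all

lemma coherent_family_Inter:
  assumes "coherent_family F" "\<A> \<subseteq> F"
  shows "\<Inter>\<A> \<in> F"
proof -
  have "uminus ` \<A> \<subseteq> F"
    using coherent_familyD(2)[OF assms(1)] assms(2) by auto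
  then have "- \<Union>(uminus ` \<A>) \<in> F"
    using coherent_familyD(1,2)[OF assms(1)] by blast
  then show ?thesis
    by simp
qed

lemma coherent_family_Int:
  "coherent_family F \<Longrightarrow> A \<in> F \<Longrightarrow> B \<in> F \<Longrightarrow> A \<inter> B \<in> F"
  using coherent_family_Inter[of F "{A, B}"] by simp

lemma coherent_family_Diff:
  "coherent_family F \<Longrightarrow> A \<in> F \<Longrightarrow> B \<in> F \<Longrightarrow> A - B \<in> F"
  using coherent_family_Int[of F A "- B"] coherent_familyD(2)[of F B] by (simp add: Diff_eq)

lemma coherent_family_relcomp:
  fixes F :: "('a::finite \<times> 'a) set set"
  assumes "coherent_family F" "A \<in> F" "B \<in> F"
  shows "A O B \<in> F"
proof -
  have "A O B = - {(x, z). card {y. (x, y) \<in> A \<and> (y, z) \<in> B} = 0}"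
    by auto
  moreover have "- {(x, z). card {y. (x, y) \<in> A \<and> (y, z) \<in> B} = 0} \<in> F"
    using coherent_familyD(2,5)[OF assms(1)] assms(2,3) by blast
  ultimately show ?thesis
    by simp
qed

lemma coherent_family_Inter_families:
  assumes "\<And>F. F \<in> \<FF> \<Longrightarrow> coherent_family F"
  shows "coherent_family (\<Inter>\<FF>)"
  unfolding coherent_family_def
proof (intro conjI ballI allI impI)
  fix \<A> assume "\<A> \<subseteq> \<Inter>\<FF>"
  have "\<Union>\<A> \<in> F" if "F \<in> \<FF>" for F
    using \<open>\<A> \<subseteq> \<Inter>\<FF>\<close> that by (intro coherent_familyD(1)[OF assms[OF that]]) blast
  then show "\<Union>\<A> \<in> \<Inter>\<FF>"
    by blast
next
  fix A assume "A \<in> \<Inter>\<FF>"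
  then have "- A \<in> F \<and> A\<inverse> \<in> F" if "F \<in> \<FF>" for F
    using that coherent_familyD(2,3)[OF assms[OF that]] by blast
  then show "- A \<in> \<Inter>\<FF>" "A\<inverse> \<in> \<Inter>\<FF>"
    by blast+
next
  show "Id \<in> \<Inter>\<FF>"
    using assms coherent_familyD(4) by auto
next
  fix A B k assume "A \<in> \<Inter>\<FF>" "B \<in> \<Inter>\<FF>"
  then have "{(x, z). card {y. (x, y) \<in> A \<and> (y, z) \<in> B} = k} \<in> F" if "F \<in> \<FF>" for F
    using that by (intro coherent_familyD(5)[OF assms[OF that]]) blast+
  then show "{(x, z). card {y. (x, y) \<in> A \<and> (y, z) \<in> B} = k} \<in> \<Inter>\<FF>"
    by blast
qed

lemma scheme_relations_coherent:
  fixes S :: "('a::finite \<times> 'a) set set"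
  assumes sch: "is_scheme UNIV S"
  shows "coherent_family (scheme_relations S)"
  unfolding coherent_family_def
proof (intro conjI ballI allI impI)
  fix \<A> assume \<A>: "\<A> \<subseteq> scheme_relations S"
  show "\<Union>\<A> \<in> scheme_relations S"
  proof (rule scheme_relationsI[OF sch])
    fix s assume "s \<in> S"
    then have "s \<subseteq> A \<or> s \<inter> A = {}" if "A \<in> \<A>" for A
      using \<A> that scheme_relationsD[OF sch] by blast
    then show "s \<subseteq> \<Union>\<A> \<or> s \<inter> \<Union>\<A> = {}"
      by blast
  qed
next
  fix A assume A: "A \<in> scheme_relations S"
  show "- A \<in> scheme_relations S"
    using scheme_relationsD[OF sch A] by (intro scheme_relationsI[OF sch]) blast
  show "A\<inverse> \<in> scheme_relations S"
  proof (rule scheme_relationsI[OF sch])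
    fix s assume "s \<in> S"
    then have "s\<inverse> \<in> S"
      using is_schemeD(5)[OF sch] by blast
    then have "s\<inverse> \<subseteq> A \<or> s\<inverse> \<inter> A = {}"
      by (rule scheme_relationsD[OF sch A])
    then show "s \<subseteq> A\<inverse> \<or> s \<inter> A\<inverse> = {}"
      by auto
  qed
next
  obtain T where T: "T \<subseteq> S" "\<Union>T = Id_on UNIV"
    using is_schemeD(6)[OF sch] by blast
  have "\<Union>T = Id"
    using T(2) by auto
  with T(1) show "Id \<in> scheme_relations S"
    unfolding scheme_relations_def by blast
next
  fix A B k assume AB: "A \<in> scheme_relations S" "B \<in> scheme_relations S"
  show "{(x, z). card {y. (x, y) \<in> A \<and> (y, z) \<in> B} = k} \<in> scheme_relations S"
    using card_paths_const[OF sch AB] by (intro scheme_relationsI[OF sch]) fast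
qed

definition rel_atom :: "('a \<times> 'a) set set \<Rightarrow> 'a \<times> 'a \<Rightarrow> ('a \<times> 'a) set" where
  "rel_atom F p = \<Inter>{A\<in>F. p \<in> A}"

lemma mem_rel_atom: "p \<in> rel_atom F p"
  unfolding rel_atom_def by blast

lemma rel_atom_least: "A \<in> F \<Longrightarrow> p \<in> A \<Longrightarrow> rel_atom F p \<subseteq> A"
  unfolding rel_atom_def by blast

lemma rel_atom_in_family: "coherent_family F \<Longrightarrow> rel_atom F p \<in> F"
  unfolding rel_atom_def by (rule coherent_family_Inter) auto

lemma rel_atom_eq:
  assumes F: "coherent_family F" and q: "q \<in> rel_atom F p"
  shows "rel_atom F q = rel_atom F p"
proof
  show "rel_atom F q \<subseteq> rel_atom F p"
    using rel_atom_least[OF rel_atom_in_family[OF F] q] .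
  have "p \<in> rel_atom F q"
  proof (rule ccontr)
    assume "p \<notin> rel_atom F q"
    then have "p \<in> rel_atom F p - rel_atom F q"
      using mem_rel_atom by blast
    moreover have "rel_atom F p - rel_atom F q \<in> F"
      using coherent_family_Diff[OF F] rel_atom_in_family[OF F] by blast
    ultimately have "rel_atom F p \<subseteq> rel_atom F p - rel_atom F q"
      by (simp add: rel_atom_least)
    then show False
      using q mem_rel_atom by blast
  qed
  then show "rel_atom F p \<subseteq> rel_atom F q"
    using rel_atom_least[OF rel_atom_in_family[OF F]] by blast
qed

lemma rel_atom_converse:
  assumes F: "coherent_family F"
  shows "rel_atom F (b, a) = (rel_atom F (a, b))\<inverse>"
proof
  have "(b, a) \<in> (rel_atom F (a, b))\<inverse>"
    using mem_rel_atom by blast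
  then show "rel_atom F (b, a) \<subseteq> (rel_atom F (a, b))\<inverse>"
    using rel_atom_least coherent_familyD(3)[OF F rel_atom_in_family[OF F]] by blast
  have "(a, b) \<in> (rel_atom F (b, a))\<inverse>"
    using mem_rel_atom by blast
  then have "rel_atom F (a, b) \<subseteq> (rel_atom F (b, a))\<inverse>"
    using rel_atom_least coherent_familyD(3)[OF F rel_atom_in_family[OF F]] by blast
  then show "(rel_atom F (a, b))\<inverse> \<subseteq> rel_atom F (b, a)"
    by auto
qed

lemma scheme_relations_rel_atoms:
  assumes F: "coherent_family F"
  shows "scheme_relations (range (rel_atom F)) = F"
proof
  show "scheme_relations (range (rel_atom F)) \<subseteq> F"
  proof
    fix A assume "A \<in> scheme_relations (range (rel_atom F))"
    then obtain T where "T \<subseteq> range (rel_atom F)" "A = \<Union>T"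
      unfolding scheme_relations_def by blast
    moreover have "range (rel_atom F) \<subseteq> F"
      using rel_atom_in_family[OF F] by blast
    ultimately show "A \<in> F"
      using coherent_familyD(1)[OF F] by auto
  qed
  show "F \<subseteq> scheme_relations (range (rel_atom F))"
  proof
    fix A assume "A \<in> F"
    then have "A = \<Union>(rel_atom F ` A)"
      using mem_rel_atom rel_atom_least[OF \<open>A \<in> F\<close>] by blast
    then show "A \<in> scheme_relations (range (rel_atom F))"
      unfolding scheme_relations_def by (intro CollectI exI[of _ "rel_atom F ` A"]) auto
  qed
qed

lemma is_scheme_rel_atoms:
  fixes F :: "('a::finite \<times> 'a) set set"
  assumes F: "coherent_family F"
  shows "is_scheme UNIV (range (rel_atom F))"
  unfolding is_scheme_def
proof (intro conjI)
  show "finite (UNIV :: 'a set)"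
    by simp
  show "\<forall>s\<in>range (rel_atom F). s \<noteq> {}"
    using mem_rel_atom by blast
  show "\<Union>(range (rel_atom F)) = UNIV \<times> UNIV"
    using mem_rel_atom by (auto intro!: UN_I)
  show "\<forall>s\<in>range (rel_atom F). \<forall>t\<in>range (rel_atom F). s \<noteq> t \<longrightarrow> s \<inter> t = {}"
  proof (intro ballI impI)
    fix s t assume "s \<in> range (rel_atom F)" "t \<in> range (rel_atom F)" "s \<noteq> t"
    then obtain p q where "s = rel_atom F p" "t = rel_atom F q" "s \<noteq> t"
      by blast
    then have "w \<notin> s \<inter> t" for w
      using rel_atom_eq[OF F, of w p] rel_atom_eq[OF F, of w q] by auto
    then show "s \<inter> t = {}"
      by blast
  qed
  show "\<forall>s\<in>range (rel_atom F). s\<inverse> \<in> range (rel_atom F)"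
  proof
    fix s assume "s \<in> range (rel_atom F)"
    then obtain p where "s = rel_atom F p"
      by blast
    moreover obtain a b where "p = (a, b)"
      by (cases p)
    ultimately have "s\<inverse> = rel_atom F (b, a)"
      using rel_atom_converse[OF F, of b a] by simp
    then show "s\<inverse> \<in> range (rel_atom F)"
      by simp
  qed
  have "Id \<in> scheme_relations (range (rel_atom F))"
    using coherent_familyD(4)[OF F] scheme_relations_rel_atoms[OF F] by simp
  then obtain T where "T \<subseteq> range (rel_atom F)" "\<Union>T = Id"
    unfolding scheme_relations_def by blast
  moreover have "Id = Id_on (UNIV :: 'a set)"
    by auto
  ultimately show "\<exists>T\<subseteq>range (rel_atom F). \<Union>T = Id_on UNIV"
    by auto
  show "\<forall>r1\<in>range (rel_atom F). \<forall>r2\<in>range (rel_atom F). \<forall>s\<in>range (rel_atom F).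
      \<forall>x z x' z'. (x, z) \<in> s \<longrightarrow> (x', z') \<in> s \<longrightarrow>
        card {y. (x, y) \<in> r1 \<and> (y, z) \<in> r2} = card {y. (x', y) \<in> r1 \<and> (y, z') \<in> r2}"
  proof (intro ballI allI impI)
    fix r1 r2 s x z x' z'
    assume r: "r1 \<in> range (rel_atom F)" "r2 \<in> range (rel_atom F)" "s \<in> range (rel_atom F)"
      and xz: "(x, z) \<in> s" "(x', z') \<in> s"
    let ?L = "{(u, v). card {y. (u, y) \<in> r1 \<and> (y, v) \<in> r2} = card {y. (x, y) \<in> r1 \<and> (y, z) \<in> r2}}"
    have "r1 \<in> F" "r2 \<in> F"
      using r(1,2) rel_atom_in_family[OF F] by auto
    then have "?L \<in> F"
      by (rule coherent_familyD(5)[OF F])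
    moreover obtain p where "s = rel_atom F p"
      using r(3) by blast
    then have "s = rel_atom F (x, z)"
      using rel_atom_eq[OF F] xz(1) by simp
    ultimately have "s \<subseteq> ?L"
      using rel_atom_least[of ?L F "(x, z)"] by simp
    then show "card {y. (x, y) \<in> r1 \<and> (y, z) \<in> r2} = card {y. (x', y) \<in> r1 \<and> (y, z') \<in> r2}"
      using xz(2) by auto
  qed
qed

section \<open>Generated schemes\<close>

text \<open>The smallest scheme exists: it is formed by the atoms of the intersection of the
  relation families of all schemes having the prescribed relations.\<close>

lemma gen_scheme_UNIV:
  fixes S M :: "('a::finite \<times> 'a) set set"
  shows "is_scheme UNIV (gen_scheme UNIV S M)"
    and "scheme_relations S \<subseteq> scheme_relations (gen_scheme UNIV S M)"
    and "M \<subseteq> scheme_relations (gen_scheme UNIV S M)"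
proof -
  define P where "P S' \<longleftrightarrow> is_scheme UNIV S' \<and> scheme_relations S \<subseteq> scheme_relations S' \<and>
    M \<subseteq> scheme_relations S'" for S'
  define F where "F = \<Inter>{scheme_relations S' | S'. P S'}"
  have F: "coherent_family F"
    unfolding F_def P_def by (rule coherent_family_Inter_families) (auto intro: scheme_relations_coherent)
  define At where "At = range (rel_atom F)"
  have At: "is_scheme UNIV At" "scheme_relations At = F"
    unfolding At_def using is_scheme_rel_atoms[OF F] scheme_relations_rel_atoms[OF F] by simp_all
  have "P At"
    unfolding P_def using At unfolding F_def P_def by blast
  have least: "scheme_relations At \<subseteq> scheme_relations S'" if "P S'" for S'
    using that unfolding At(2) F_def by blast
  have "gen_scheme UNIV S M = (THE S'. P S' \<and> (\<forall>S''. P S'' \<longrightarrow> scheme_relations S' \<subseteq> scheme_relations S''))"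
    unfolding gen_scheme_def P_def by simp
  also have "\<dots> = At"
  proof (rule the_equality)
    show "P At \<and> (\<forall>S''. P S'' \<longrightarrow> scheme_relations At \<subseteq> scheme_relations S'')"
      using \<open>P At\<close> least by blast
    fix S' assume "P S' \<and> (\<forall>S''. P S'' \<longrightarrow> scheme_relations S' \<subseteq> scheme_relations S'')"
    then have "is_scheme UNIV S'" "scheme_relations S' = scheme_relations At"
      using \<open>P At\<close> least unfolding P_def by blast+
    then show "S' = At"
      using At(1) scheme_eqI by blast
  qed
  finally show "is_scheme UNIV (gen_scheme UNIV S M)"
    and "scheme_relations S \<subseteq> scheme_relations (gen_scheme UNIV S M)"
    and "M \<subseteq> scheme_relations (gen_scheme UNIV S M)"
    using \<open>P At\<close> unfolding P_def by simp_all
qed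

lemma point_ext_UNIV:
  fixes C :: "('a::finite \<times> 'a) set set"
  shows "is_scheme UNIV (point_ext UNIV C w)"
    and "scheme_relations C \<subseteq> scheme_relations (point_ext UNIV C w)"
    and "{(w, w)} \<in> scheme_relations (point_ext UNIV C w)"
  unfolding point_ext_def using gen_scheme_UNIV[where S = C and M = "{{(w, w)}}"] by simp_all

section \<open>Restriction and invariant relations\<close>

lemma restrict_scheme_partition:
  assumes "is_scheme UNIV S"
  shows "pairwise disjnt (restrict_scheme U S)" and "\<Union>(restrict_scheme U S) = U \<times> U"
proof -
  show "pairwise disjnt (restrict_scheme U S)"
  proof (rule pairwiseI)
    fix s t assume "s \<in> restrict_scheme U S" "t \<in> restrict_scheme U S" "s \<noteq> t"
    then obtain s0 t0 where st: "s0 \<in> S" "t0 \<in> S" "s = s0 \<inter> U \<times> U" "t = t0 \<inter> U \<times> U" "s0 \<noteq> t0"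
      unfolding restrict_scheme_def by blast
    then have "disjnt s0 t0"
      using pairwiseD[OF is_schemeD(4)[OF assms]] by blast
    then show "disjnt s t"
      using st by (auto simp: disjnt_def)
  qed
  have "p \<in> \<Union>(restrict_scheme U S)" if "p \<in> U \<times> U" for p
  proof -
    have "p \<in> \<Union>S"
      using is_schemeD(3)[OF assms] by simp
    then obtain s where "s \<in> S" "p \<in> s"
      by blast
    then have "s \<inter> U \<times> U \<in> restrict_scheme U S"
      using that unfolding restrict_scheme_def by blast
    then show ?thesis
      using \<open>p \<in> s\<close> that by blast
  qed
  then show "\<Union>(restrict_scheme U S) = U \<times> U"
    unfolding restrict_scheme_def by blast
qed

lemma restrict_scheme_relationsI:
  assumes "A \<in> scheme_relations S" "A \<subseteq> U \<times> U"
  shows "A \<in> scheme_relations (restrict_scheme U S)"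
proof -
  obtain T where T: "T \<subseteq> S" "A = \<Union>T"
    using assms(1) unfolding scheme_relations_def by blast
  let ?T = "{t \<inter> U \<times> U | t. t \<in> T \<and> t \<inter> U \<times> U \<noteq> {}}"
  have "A = \<Union>?T"
    using T(2) assms(2) by blast
  moreover have "?T \<subseteq> restrict_scheme U S"
    using T(1) unfolding restrict_scheme_def by blast
  ultimately show ?thesis
    unfolding scheme_relations_def by blast
qed

lemma invariant_rel_Inter:
  assumes inj: "\<forall>g\<in>\<Gamma>. inj g" and "\<A> \<noteq> {}" and inv: "\<forall>A\<in>\<A>. invariant_rel \<Gamma> A"
  shows "invariant_rel \<Gamma> (\<Inter>\<A>)"
  unfolding invariant_rel_def
proof
  fix g assume "g \<in> \<Gamma>"
  let ?G = "\<lambda>(x, y). (g x, g y)"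
  have "inj ?G"
    using inj \<open>g \<in> \<Gamma>\<close> by (auto simp: inj_def)
  obtain A0 where "A0 \<in> \<A>"
    using \<open>\<A> \<noteq> {}\<close> by blast
  with \<open>inj ?G\<close> have "?G ` (\<Inter>A\<in>\<A>. A) = (\<Inter>A\<in>\<A>. ?G ` A)"
    by (intro image_INT) auto
  also have "\<dots> = \<Inter>\<A>"
    using inv \<open>g \<in> \<Gamma>\<close> unfolding invariant_rel_def by simp
  finally show "?G ` \<Inter>\<A> = \<Inter>\<A>"
    by simp
qed

lemma invariant_rel_Diff:
  assumes inj: "\<forall>g\<in>\<Gamma>. inj g" and "invariant_rel \<Gamma> A" "invariant_rel \<Gamma> B"
  shows "invariant_rel \<Gamma> (A - B)"
  unfolding invariant_rel_def
proof
  fix g assume "g \<in> \<Gamma>"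
  let ?G = "\<lambda>(x, y). (g x, g y)"
  have "inj ?G"
    using inj \<open>g \<in> \<Gamma>\<close> by (auto simp: inj_def)
  then show "?G ` (A - B) = A - B"
    using assms(2,3) \<open>g \<in> \<Gamma>\<close> unfolding invariant_rel_def by (simp add: image_set_diff)
qed

lemma partition_relations_Inter:
  assumes S: "pairwise disjnt S" "\<Union>S = W" and "\<A> \<noteq> {}" "\<A> \<subseteq> scheme_relations S"
  shows "\<Inter>\<A> \<in> scheme_relations S"
proof -
  have rel: "A \<subseteq> W \<and> (\<forall>s\<in>S. s \<subseteq> A \<or> s \<inter> A = {})" if "A \<in> \<A>" for A
    using that assms(4) scheme_relations_partition[OF S, of A] by blast
  have "\<Inter>\<A> \<subseteq> W"
    using rel \<open>\<A> \<noteq> {}\<close> by blast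
  moreover have "s \<subseteq> \<Inter>\<A> \<or> s \<inter> \<Inter>\<A> = {}" if "s \<in> S" for s
  proof (cases "\<exists>A\<in>\<A>. s \<inter> A = {}")
    case False
    then show ?thesis
      using rel that by blast
  next
    case True
    then show ?thesis
      by blast
  qed
  ultimately show ?thesis
    unfolding scheme_relations_partition[OF S] by blast
qed

lemma partition_relations_Diff:
  assumes S: "pairwise disjnt S" "\<Union>S = W" and "A \<in> scheme_relations S" "B \<in> scheme_relations S"
  shows "A - B \<in> scheme_relations S"
proof -
  have "A \<subseteq> W \<and> (\<forall>s\<in>S. s \<subseteq> A \<or> s \<inter> A = {})" "B \<subseteq> W \<and> (\<forall>s\<in>S. s \<subseteq> B \<or> s \<inter> B = {})"
    using assms(3,4) unfolding scheme_relations_partition[OF S] by blast+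
  then show ?thesis
    unfolding scheme_relations_partition[OF S] by blast
qed

text \<open>The witness is the least invariant relation of S containing p.\<close>

lemma fixed_scheme_basis_containing:
  assumes S: "pairwise disjnt S" "\<Union>S = W" and inj: "\<forall>g\<in>\<Gamma>. inj g"
    and A: "A \<in> scheme_relations S" "invariant_rel \<Gamma> A" "p \<in> A"
  shows "\<exists>m\<in>fixed_scheme \<Gamma> S. p \<in> m \<and> m \<subseteq> A"
proof -
  define Fam where "Fam = {B \<in> scheme_relations S. invariant_rel \<Gamma> B \<and> p \<in> B}"
  define m where "m = \<Inter>Fam"
  have "A \<in> Fam"
    using A unfolding Fam_def by simp
  then have rel: "m \<in> scheme_relations S" and inv: "invariant_rel \<Gamma> m"
    unfolding m_def Fam_def
    by (auto intro!: partition_relations_Inter[OF S] invariant_rel_Inter[OF inj])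
  have "p \<in> m" "m \<subseteq> A"
    using \<open>A \<in> Fam\<close> unfolding m_def Fam_def by auto
  have "r = m" if r: "r \<in> scheme_relations S" "invariant_rel \<Gamma> r" "r \<noteq> {}" "r \<subseteq> m" for r
  proof (cases "p \<in> r")
    case True
    then have "r \<in> Fam"
      unfolding Fam_def using r by simp
    then show ?thesis
      using r(4) unfolding m_def by blast
  next
    case False
    then have "m - r \<in> Fam"
      unfolding Fam_def using partition_relations_Diff[OF S rel r(1)] invariant_rel_Diff[OF inj inv r(2)] \<open>p \<in> m\<close>
      by blast
    then have "m \<subseteq> m - r"
      unfolding m_def by blast
    then show ?thesis
      using r(3,4) by blast
  qed
  then have "m \<in> fixed_scheme \<Gamma> S"
    unfolding fixed_scheme_def using rel inv \<open>p \<in> m\<close> by blast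
  then show ?thesis
    using \<open>p \<in> m\<close> \<open>m \<subseteq> A\<close> by blast
qed

lemma invariant_in_fixed_scheme_relations:
  assumes S: "pairwise disjnt S" "\<Union>S = W" and inj: "\<forall>g\<in>\<Gamma>. inj g"
    and A: "A \<in> scheme_relations S" "invariant_rel \<Gamma> A"
  shows "A \<in> scheme_relations (fixed_scheme \<Gamma> S)"
proof -
  have "A = \<Union>{m \<in> fixed_scheme \<Gamma> S. m \<subseteq> A}"
    using fixed_scheme_basis_containing[OF S inj A] by blast
  then show ?thesis
    unfolding scheme_relations_def by blast
qed

section \<open>Right-invariant relations on the units\<close>

lemma units_of_ring_iff [simp]: "x \<in> units_of_ring \<longleftrightarrow> x dvd 1"
  by (simp add: units_of_ring_def)

lemma unit_mult:
  fixes a b :: "'a::comm_semiring_1"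
  shows "a dvd 1 \<Longrightarrow> b dvd 1 \<Longrightarrow> a * b dvd 1"
  using mult_dvd_mono[of a 1 b 1] by simp

lemma unit_inverseE:
  fixes a :: "'a::comm_semiring_1"
  assumes "a dvd 1"
  obtains b where "a * b = 1" "b dvd 1"
  using assms by (metis dvdE dvd_triv_right)

lemma inj_mult_right_unit:
  fixes a :: "'a::comm_semiring_1"
  assumes "a dvd 1"
  shows "inj (\<lambda>x. x * a)"
proof (rule injI)
  fix x y :: 'a assume "x * a = y * a"
  obtain b where "a * b = 1"
    using assms by (rule unit_inverseE)
  then show "x = y"
    using \<open>x * a = y * a\<close> by (metis mult.assoc mult_1_right)
qed

lemma invariant_rel_right_units:
  fixes A :: "('a::comm_ring_1 \<times> 'a) set"
  shows "invariant_rel ((\<lambda>a x. x * a) ` units_of_ring) A \<longleftrightarrow>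
    (\<forall>a. a dvd 1 \<longrightarrow> (\<forall>(x, y)\<in>A. (x * a, y * a) \<in> A))"
proof
  assume inv: "invariant_rel ((\<lambda>a x. x * a) ` units_of_ring) A"
  show "\<forall>a. a dvd 1 \<longrightarrow> (\<forall>(x, y)\<in>A. (x * a, y * a) \<in> A)"
  proof (intro allI impI ballI, clarify)
    fix a x y assume "a dvd (1::'a)" "(x, y) \<in> A"
    then have "(x * a, y * a) \<in> (\<lambda>(x, y). (x * a, y * a)) ` A"
      by force
    then show "(x * a, y * a) \<in> A"
      using inv \<open>a dvd 1\<close> unfolding invariant_rel_def by auto
  qed
next
  assume closed: "\<forall>a. a dvd 1 \<longrightarrow> (\<forall>(x, y)\<in>A. (x * a, y * a) \<in> A)"
  show "invariant_rel ((\<lambda>a x. x * a) ` units_of_ring) A"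
    unfolding invariant_rel_def
  proof (clarify)
    fix a :: 'a assume "a \<in> units_of_ring"
    then obtain b where "a * b = 1" "b dvd 1" "a dvd 1"
      by (auto elim: unit_inverseE)
    show "(\<lambda>(x, y). (x * a, y * a)) ` A = A"
    proof
      show "(\<lambda>(x, y). (x * a, y * a)) ` A \<subseteq> A"
        using closed \<open>a dvd 1\<close> by auto
      show "A \<subseteq> (\<lambda>(x, y). (x * a, y * a)) ` A"
      proof clarify
        fix x y assume "(x, y) \<in> A"
        then have "(x * b, y * b) \<in> A"
          using closed \<open>b dvd 1\<close> by auto
        moreover have "(x, y) = (x * b * a, y * b * a)"
          using \<open>a * b = 1\<close> by (simp add: mult.assoc mult.commute[of b a])
        ultimately show "(x, y) \<in> (\<lambda>(x, y). (x * a, y * a)) ` A"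
          by (metis (no_types, lifting) case_prod_conv image_eqI)
      qed
    qed
  qed
qed

lemma Rrel_invariant: "invariant_rel ((\<lambda>a x. x * a) ` units_of_ring) (Rrel X)"
  unfolding invariant_rel_right_units
proof (intro allI impI ballI, clarify)
  fix a g z :: 'a assume "a dvd 1" "(g, z) \<in> Rrel X"
  then obtain x where "z = x * g" "g dvd 1" "x \<in> X"
    unfolding Rrel_def by auto
  moreover have "g * a dvd 1"
    using \<open>g dvd 1\<close> \<open>a dvd 1\<close> by (rule unit_mult)
  ultimately show "(g * a, z * a) \<in> Rrel X"
    unfolding Rrel_def by (intro CollectI exI[of _ "g * a"] exI[of _ x]) (simp add: mult.assoc)
qed

lemma Rrel_subset_units:
  assumes "X \<subseteq> units_of_ring"
  shows "Rrel X \<subseteq> units_of_ring \<times> units_of_ring"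
proof
  fix p assume "p \<in> Rrel X"
  then obtain g x where "p = (g, x * g)" "g dvd 1" "x \<in> X"
    unfolding Rrel_def by auto
  moreover have "x dvd 1"
    using \<open>x \<in> X\<close> assms by auto
  ultimately show "p \<in> units_of_ring \<times> units_of_ring"
    by (simp add: unit_mult)
qed

lemma one_mem_Rrel_iff: "(1, z) \<in> Rrel X \<longleftrightarrow> z \<in> X"
  unfolding Rrel_def by auto

lemma invariant_eq_Rrel:
  fixes A :: "('a::comm_ring_1 \<times> 'a) set"
  assumes A: "A \<subseteq> units_of_ring \<times> units_of_ring" "invariant_rel ((\<lambda>a x. x * a) ` units_of_ring) A"
  shows "A = Rrel {z. (1, z) \<in> A}"
proof
  have closed: "(x * a, y * a) \<in> A" if "a dvd 1" "(x, y) \<in> A" for a x y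
    using A(2) that unfolding invariant_rel_right_units by blast
  show "A \<subseteq> Rrel {z. (1, z) \<in> A}"
  proof clarify
    fix g z assume "(g, z) \<in> A"
    then have "g dvd 1"
      using A(1) by auto
    then obtain b where "g * b = 1" "b dvd 1"
      by (rule unit_inverseE)
    then have "(1, z * b) \<in> A"
      using closed[OF \<open>b dvd 1\<close> \<open>(g, z) \<in> A\<close>] by simp
    moreover have "z = (z * b) * g"
      using \<open>g * b = 1\<close> by (simp add: mult.assoc mult.commute[of b g])
    ultimately show "(g, z) \<in> Rrel {z. (1, z) \<in> A}"
      unfolding Rrel_def using \<open>g dvd 1\<close> by auto
  qed
  show "Rrel {z. (1, z) \<in> A} \<subseteq> A"
    unfolding Rrel_def using closed by fastforce
qed

lemma mult_sring_unionsI: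
  fixes K :: "'a::{comm_ring_1,finite} set"
  assumes Y: "Y \<subseteq> units_of_ring" and rel: "Rrel Y \<in> scheme_relations (C_prime K)"
  shows "Y \<in> sring_unions (mult_sring_basic K)"
proof -
  obtain T where T: "T \<subseteq> C_prime K" "Rrel Y = \<Union>T"
    using rel unfolding scheme_relations_def by blast
  define X where "X t = {z. (1, z) \<in> t}" for t :: "('a \<times> 'a) set"
  have "X t \<in> mult_sring_basic K" if "t \<in> T" for t
  proof -
    have units: "t \<subseteq> units_of_ring \<times> units_of_ring"
      using T Rrel_subset_units[OF Y] that by blast
    moreover have "invariant_rel ((\<lambda>a x. x * a) ` units_of_ring) t"
      using T(1) that unfolding C_prime_def fixed_scheme_def by blast
    ultimately have "Rrel (X t) = t"
      unfolding X_def using invariant_eq_Rrel by metis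
    moreover have "X t \<subseteq> units_of_ring"
      unfolding X_def using units by blast
    ultimately show ?thesis
      unfolding mult_sring_basic_def using T(1) that by auto
  qed
  moreover have "Y = \<Union>(X ` T)"
    using T(2) one_mem_Rrel_iff unfolding X_def by blast
  ultimately show ?thesis
    unfolding sring_unions_def by blast
qed

lemma point_ext_relation_in_mult_sring_unions:
  fixes K :: "'a::{comm_ring_1,finite} set"
  assumes Y: "Y \<subseteq> units_of_ring" and rel: "Rrel Y \<in> scheme_relations (point_ext UNIV (Cyc K) 0)"
  shows "Y \<in> sring_unions (mult_sring_basic K)"
proof -
  have inj: "\<forall>g\<in>(\<lambda>a x. x * a) ` units_of_ring. inj (g :: 'a \<Rightarrow> 'a)"
    using inj_mult_right_unit by auto
  have "Rrel Y \<in> scheme_relations (restrict_scheme units_of_ring (point_ext UNIV (Cyc K) 0))"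
    using rel Rrel_subset_units[OF Y] by (rule restrict_scheme_relationsI)
  then have "Rrel Y \<in> scheme_relations (C_prime K)"
    unfolding C_prime_def
    using invariant_in_fixed_scheme_relations[OF restrict_scheme_partition[OF point_ext_UNIV(1)] inj]
      Rrel_invariant by blast
  then show ?thesis
    by (rule mult_sring_unionsI[OF Y])
qed

section \<open>Cyclotomic relations\<close>

definition cyc_rel :: "'a::comm_ring_1 set \<Rightarrow> 'a \<Rightarrow> ('a \<times> 'a) set" where
  "cyc_rel K s = {(x, y). y - x \<in> (\<lambda>k. s * k) ` K}"

lemma cyc_rel_in_Cyc: "cyc_rel K s \<in> Cyc K"
  unfolding cyc_rel_def Cyc_def by blast

lemma coset_product_eq_relcomp:
  "(\<lambda>k. a * k) ` K \<times> (\<lambda>k. b * k) ` K = (cyc_rel K a)\<inverse> O {(0, 0)} O cyc_rel K b"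
proof (rule set_eqI, clarify)
  fix x y
  have "(x, y) \<in> (\<lambda>k. a * k) ` K \<times> (\<lambda>k. b * k) ` K \<longleftrightarrow>
      (x, 0) \<in> (cyc_rel K a)\<inverse> \<and> (0, y) \<in> cyc_rel K b"
    unfolding cyc_rel_def by simp
  also have "\<dots> \<longleftrightarrow> (x, y) \<in> (cyc_rel K a)\<inverse> O {(0, 0)} O cyc_rel K b"
    by blast
  finally show "(x, y) \<in> (\<lambda>k. a * k) ` K \<times> (\<lambda>k. b * k) ` K \<longleftrightarrow>
      (x, y) \<in> (cyc_rel K a)\<inverse> O {(0, 0)} O cyc_rel K b" .
qed

lemma cyc_rel_in_point_ext:
  fixes K :: "'a::{comm_ring_1,finite} set"
  shows "cyc_rel K s \<in> scheme_relations (point_ext UNIV (Cyc K) 0)"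
  using point_ext_UNIV(2) basis_in_scheme_relations[OF cyc_rel_in_Cyc] by blast

lemma coset_product_in_point_ext:
  fixes K :: "'a::{comm_ring_1,finite} set"
  shows "(\<lambda>k. a * k) ` K \<times> (\<lambda>k. b * k) ` K \<in> scheme_relations (point_ext UNIV (Cyc K) 0)"
  unfolding coset_product_eq_relcomp
  by (intro coherent_family_relcomp[OF scheme_relations_coherent[OF point_ext_UNIV(1)]]
      coherent_familyD(3)[OF scheme_relations_coherent[OF point_ext_UNIV(1)]]
      cyc_rel_in_point_ext point_ext_UNIV(3))

lemma is_unit_subgroupD:
  assumes "is_unit_subgroup K"
  shows "k \<in> K \<Longrightarrow> k dvd 1" "1 \<in> K" "k \<in> K \<Longrightarrow> l \<in> K \<Longrightarrow> k * l \<in> K"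
    "k \<in> K \<Longrightarrow> \<exists>l\<in>K. k * l = 1"
  using assms unfolding is_unit_subgroup_def by auto

lemma Rrel_coset:
  fixes K :: "'a::comm_ring_1 set"
  assumes K: "is_unit_subgroup K"
  shows "Rrel ((\<lambda>k. r * k) ` K) = (\<Union>a\<in>units_of_ring. (\<lambda>k. a * k) ` K \<times> (\<lambda>k. r * a * k) ` K)"
proof
  show "Rrel ((\<lambda>k. r * k) ` K) \<subseteq> (\<Union>a\<in>units_of_ring. (\<lambda>k. a * k) ` K \<times> (\<lambda>k. r * a * k) ` K)"
  proof
    fix p assume "p \<in> Rrel ((\<lambda>k. r * k) ` K)"
    then obtain g k where p: "p = (g, r * k * g)" "g dvd 1" "k \<in> K"
      unfolding Rrel_def by auto
    have "g \<in> (\<lambda>k. g * k) ` K"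
      using is_unit_subgroupD(2)[OF K] by force
    moreover have "r * k * g \<in> (\<lambda>k. r * g * k) ` K"
      using p(3) by (force simp: ac_simps)
    ultimately show "p \<in> (\<Union>a\<in>units_of_ring. (\<lambda>k. a * k) ` K \<times> (\<lambda>k. r * a * k) ` K)"
      using p by auto
  qed
  show "(\<Union>a\<in>units_of_ring. (\<lambda>k. a * k) ` K \<times> (\<lambda>k. r * a * k) ` K) \<subseteq> Rrel ((\<lambda>k. r * k) ` K)"
  proof clarify
    fix a k1 k2 :: 'a assume "a \<in> units_of_ring" "k1 \<in> K" "k2 \<in> K"
    obtain k1' where "k1' \<in> K" "k1 * k1' = 1"
      using is_unit_subgroupD(4)[OF K \<open>k1 \<in> K\<close>] by blast
    have "a * k1 dvd 1"
      using \<open>a \<in> units_of_ring\<close> is_unit_subgroupD(1)[OF K \<open>k1 \<in> K\<close>] by (simp add: unit_mult)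
    moreover have "r * (k2 * k1') \<in> (\<lambda>k. r * k) ` K"
      using is_unit_subgroupD(3)[OF K \<open>k2 \<in> K\<close> \<open>k1' \<in> K\<close>] by blast
    moreover have "r * a * k2 = r * (k2 * k1') * (a * k1)"
    proof -
      have "r * (k2 * k1') * (a * k1) = r * a * k2 * (k1 * k1')"
        by (simp add: ac_simps)
      then show ?thesis
        using \<open>k1 * k1' = 1\<close> by simp
    qed
    ultimately show "(a * k1, r * a * k2) \<in> Rrel ((\<lambda>k. r * k) ` K)"
      unfolding Rrel_def by auto
  qed
qed

lemma Rrel_shifted_coset:
  fixes K :: "'a::comm_ring_1 set"
  assumes K: "is_unit_subgroup K"
  shows "Rrel ((\<lambda>k. 1 + r * k) ` K \<inter> units_of_ring) =
    (\<Union>a\<in>units_of_ring. \<Union>b\<in>units_of_ring. ((\<lambda>k. a * k) ` K \<times> (\<lambda>k. b * k) ` K) \<inter> cyc_rel K (r * a))"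
proof
  show "Rrel ((\<lambda>k. 1 + r * k) ` K \<inter> units_of_ring) \<subseteq>
    (\<Union>a\<in>units_of_ring. \<Union>b\<in>units_of_ring. ((\<lambda>k. a * k) ` K \<times> (\<lambda>k. b * k) ` K) \<inter> cyc_rel K (r * a))"
  proof
    fix p assume "p \<in> Rrel ((\<lambda>k. 1 + r * k) ` K \<inter> units_of_ring)"
    then obtain g k where p: "p = (g, (1 + r * k) * g)" "g dvd 1" "1 + r * k dvd 1" "k \<in> K"
      unfolding Rrel_def by auto
    let ?b = "(1 + r * k) * g"
    have "c \<in> (\<lambda>k. c * k) ` K" for c
      using is_unit_subgroupD(2)[OF K] by force
    moreover have "?b - g \<in> (\<lambda>k. r * g * k) ` K"
      using p(4) by (force simp: algebra_simps)
    ultimately have "p \<in> ((\<lambda>k. g * k) ` K \<times> (\<lambda>k. ?b * k) ` K) \<inter> cyc_rel K (r * g)"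
      using p(1) unfolding cyc_rel_def by auto
    moreover have "?b dvd 1"
      using p(2,3) by (simp add: unit_mult)
    ultimately show "p \<in> (\<Union>a\<in>units_of_ring. \<Union>b\<in>units_of_ring.
        ((\<lambda>k. a * k) ` K \<times> (\<lambda>k. b * k) ` K) \<inter> cyc_rel K (r * a))"
      using p(2) units_of_ring_iff by blast
  qed
  show "(\<Union>a\<in>units_of_ring. \<Union>b\<in>units_of_ring. ((\<lambda>k. a * k) ` K \<times> (\<lambda>k. b * k) ` K) \<inter> cyc_rel K (r * a))
    \<subseteq> Rrel ((\<lambda>k. 1 + r * k) ` K \<inter> units_of_ring)"
  proof clarify
    fix a b k1 k2 :: 'a
    assume ab: "a \<in> units_of_ring" "b \<in> units_of_ring" "k1 \<in> K" "k2 \<in> K"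
      and "(a * k1, b * k2) \<in> cyc_rel K (r * a)"
    then obtain k3 where "k3 \<in> K" and k3: "b * k2 = a * k1 + r * a * k3"
      unfolding cyc_rel_def by (auto simp: algebra_simps)
    obtain k1' where "k1' \<in> K" "k1 * k1' = 1"
      using is_unit_subgroupD(4)[OF K \<open>k1 \<in> K\<close>] by blast
    obtain a' where "a * a' = 1" "a' dvd 1"
      using ab(1) by (auto elim: unit_inverseE)
    define x where "x = b * k2 * (a' * k1')"
    have x: "x = 1 + r * (k3 * k1')"
    proof -
      have "x = (a * a') * (k1 * k1') + r * (k3 * k1') * (a * a')"
        unfolding x_def k3 by (simp add: algebra_simps)
      then show ?thesis
        using \<open>a * a' = 1\<close> \<open>k1 * k1' = 1\<close> by simp
    qed
    have "x dvd 1"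
      unfolding x_def using ab is_unit_subgroupD(1)[OF K] \<open>a' dvd 1\<close> \<open>k1' \<in> K\<close>
      by (simp add: unit_mult)
    moreover have "k3 * k1' \<in> K"
      using is_unit_subgroupD(3)[OF K \<open>k3 \<in> K\<close> \<open>k1' \<in> K\<close>] .
    moreover have "a * k1 dvd 1"
      using ab(1,3) is_unit_subgroupD(1)[OF K] by (simp add: unit_mult)
    moreover have "b * k2 = x * (a * k1)"
    proof -
      have "x * (a * k1) = b * k2 * ((a * a') * (k1 * k1'))"
        unfolding x_def by (simp add: ac_simps)
      then show ?thesis
        using \<open>a * a' = 1\<close> \<open>k1 * k1' = 1\<close> by simp
    qed
    ultimately show "(a * k1, b * k2) \<in> Rrel ((\<lambda>k. 1 + r * k) ` K \<inter> units_of_ring)"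
      unfolding Rrel_def x by auto
  qed
qed

theorem theorem4p2:
  fixes K :: "'a::{comm_ring_1,finite} set"
  assumes "is_unit_subgroup K"
  shows "(\<forall>r\<in>units_of_ring. (\<lambda>k. r * k) ` K \<in> sring_unions (mult_sring_basic K)) \<and>
         (\<forall>r::'a. ((\<lambda>k. 1 + r * k) ` K) \<inter> units_of_ring \<in> sring_unions (mult_sring_basic K))"
proof -
  let ?S0 = "point_ext UNIV (Cyc K) (0::'a)"
  have F: "coherent_family (scheme_relations ?S0)"
    by (rule scheme_relations_coherent[OF point_ext_UNIV(1)])
  have "(\<lambda>k. r * k) ` K \<in> sring_unions (mult_sring_basic K)" if "r \<in> units_of_ring" for r
  proof (rule point_ext_relation_in_mult_sring_unions)
    show "(\<lambda>k. r * k) ` K \<subseteq> units_of_ring"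
      using that is_unit_subgroupD(1)[OF assms] by (auto simp: unit_mult)
    show "Rrel ((\<lambda>k. r * k) ` K) \<in> scheme_relations ?S0"
      unfolding Rrel_coset[OF assms] using coset_product_in_point_ext
      by (intro coherent_familyD(1)[OF F]) blast
  qed
  moreover have "(\<lambda>k. 1 + r * k) ` K \<inter> units_of_ring \<in> sring_unions (mult_sring_basic K)" for r
  proof (rule point_ext_relation_in_mult_sring_unions)
    have "(\<Union>b\<in>units_of_ring. ((\<lambda>k. a * k) ` K \<times> (\<lambda>k. b * k) ` K) \<inter> cyc_rel K (r * a))
        \<in> scheme_relations ?S0" for a
      using coherent_family_Int[OF F coset_product_in_point_ext cyc_rel_in_point_ext]
      by (intro coherent_familyD(1)[OF F]) blast
    then show "Rrel ((\<lambda>k. 1 + r * k) ` K \<inter> units_of_ring) \<in> scheme_relations ?S0"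
      unfolding Rrel_shifted_coset[OF assms] by (intro coherent_familyD(1)[OF F]) blast
  qed blast
  ultimately show ?thesis
    by blast
qed

end
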